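(* Let $a>0$, let $\lambda,\mu\in\mathbb{C}$ with $0<\operatorname{Re}(\mu)<\operatorname{Re}(\lambda)$, and let $y\in\mathbb{C}$. Put $D(x)=x+a+\sqrt{x^{2}+2ax}$ for $x>0$. Then \[ \int_{0}^{\infty}x^{\mu-1}D(x)^{-\lambda}\left[I_{0}\!\left(\frac{y}{D(x)}\right)+\mathbf{L}_{0}\!\left(\frac{y}{D(x)}\right)\right]dx =\frac{2^{1-\mu}a^{\mu-\lambda}\Gamma(2\mu)}{\sqrt{\pi}}\; {}_{3}\Psi_{3}\!\left[\begin{array}{c}(\tfrac12,\tfrac12),\ (\lambda+1,1),\ (\lambda-\mu,1)\\ (1,\tfrac12),\ (\lambda,1),\ (1+\lambda+\mu,1)\end{array}\Bigg|\ \frac{y}{a}\right]. \]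
   Context: $I_{0}$ is the modified Bessel function of the first kind of order $0$ and $\mathbf{L}_{0}$ is the modified Struve function of order $0$. The generalized Wright function is ${}_{p}\Psi_{q}\!\left[\begin{array}{c}(a_i,\alpha_i)_{1,p}\\(b_j,\beta_j)_{1,q}\end{array}\Big|z\right]=\sum_{k=0}^{\infty}\frac{\prod_{i=1}^{p}\Gamma(a_i+\alpha_i k)}{\prod_{j=1}^{q}\Gamma(b_j+\beta_j k)}\frac{z^{k}}{k!}$, with $a_i,b_j\in\mathbb{C}$, $\alpha_i,\beta_j\in\mathbb{R}$. *)

theory Defs
  imports "HOL-Analysis.Analysis"
begin

definition besselI0 :: "complex \<Rightarrow> complex" where
  "besselI0 z = (\<Sum>k. (z / 2) ^ (2 * k) / (of_nat (fact k)) ^ 2)"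

definition struveL0 :: "complex \<Rightarrow> complex" where
  "struveL0 z = (\<Sum>k. (z / 2) ^ (2 * k + 1) / (Gamma (of_nat k + 3 / 2)) ^ 2)"

definition wrightPsi ::
  "(complex \<times> real) list \<Rightarrow> (complex \<times> real) list \<Rightarrow> complex \<Rightarrow> complex" where
  "wrightPsi as bs z =
     (\<Sum>k. (\<Prod>(a, \<alpha>)\<leftarrow>as. Gamma (a + of_real \<alpha> * of_nat k))
          / (\<Prod>(b, \<beta>)\<leftarrow>bs. Gamma (b + of_real \<beta> * of_nat k))
          * z ^ k / of_nat (fact k))"

end

theory Submission
  imports Defs
begin

text \<open>
  The substitution \<open>v = a / D(x)\<close>, i.e. \<open>x = a (1 - v)^2 / (2 v)\<close>, maps \<open>(0, \<infinity>)\<close> onto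
  \<open>(0, 1)\<close> and turns the integral into
  \<open>a^(\<mu> - \<lambda>) 2^(-\<mu>) \<integral>\<^sub>0\<^sup>1 v^(\<lambda> - \<mu> - 1) (1 - v)^(2\<mu> - 1) (1 + v) (I\<^sub>0 + L\<^sub>0)(y v / a) dv\<close>.
  The series of \<open>I\<^sub>0\<close> and \<open>L\<^sub>0\<close> are the even and odd parts of the single entire series
  \<open>I\<^sub>0(z) + L\<^sub>0(z) = \<Sum>\<^sub>n (z/2)^n / \<Gamma>(1 + n/2)^2\<close>, which can be integrated term by term;
  the \<open>n\<close>-th term becomes \<open>B(\<lambda> - \<mu> + n, 2\<mu>) + B(\<lambda> - \<mu> + n + 1, 2\<mu>)\<close>. Legendre's duplication
  formula \<open>\<Gamma>(1/2 + n/2) \<Gamma>(1 + n/2) = \<surd>\<pi> n! / 2^n\<close> then identifies the resulting series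
  with the Wright series. The Beta integral for complex parameters is obtained from the Gamma
  integral by Fubini's theorem, applied to the convolution of two Gamma densities.
\<close>

lemma Re_pos_notin_nonpos_Ints: "0 < Re z \<Longrightarrow> z \<notin> \<int>\<^sub>\<le>\<^sub>0"
  by (auto elim!: nonpos_Ints_cases)

lemma Gamma_nonzero_Re_pos: "0 < Re z \<Longrightarrow> Gamma z \<noteq> 0"
  by (simp add: Gamma_eq_zero_iff Re_pos_notin_nonpos_Ints)

section \<open>The series of \<open>I\<^sub>0 + L\<^sub>0\<close>\<close>

lemma sums_even_odd:
  fixes f :: "nat \<Rightarrow> 'a::real_normed_vector"
  assumes "(\<lambda>k. f (2 * k)) sums A" and "(\<lambda>k. f (2 * k + 1)) sums B"
  shows "f sums (A + B)"
proof -
  have "(\<lambda>n. if even n then f n else 0) sums A"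
    using assms(1) by (subst sums_mono_reindex[of "\<lambda>k. 2 * k", symmetric])
      (auto simp: strict_mono_def elim!: evenE)
  moreover have "(\<lambda>n. if odd n then f n else 0) sums B"
    using assms(2) by (subst sums_mono_reindex[of "\<lambda>k. 2 * k + 1", symmetric])
      (auto simp: strict_mono_def elim!: oddE)
  ultimately show ?thesis
    by (rule sums_add[THEN sums_cong[THEN iffD1, rotated]]) auto
qed

lemma summable_even_odd:
  fixes f :: "nat \<Rightarrow> 'a::real_normed_vector"
  assumes "summable (\<lambda>k. f (2 * k))" and "summable (\<lambda>k. f (2 * k + 1))"
  shows "summable f"
  using assms unfolding summable_def by (blast intro: sums_even_odd)

lemma Gamma_nat_plus_three_halves_ge: "fact k * (sqrt pi / 2) \<le> Gamma (real k + 3 / 2)"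
proof (induction k)
  case 0
  have "Gamma (3 / 2 :: real) = Gamma (1 / 2 + 1)" by simp
  also have "\<dots> = sqrt pi / 2" by (subst Gamma_plus1) (auto simp: Gamma_one_half_real)
  finally show ?case by simp
next
  case (Suc k)
  have "fact (Suc k) * (sqrt pi / 2) = (real k + 1) * (fact k * (sqrt pi / 2))"
    by (simp add: algebra_simps)
  also have "\<dots> \<le> (real k + 3 / 2) * Gamma (real k + 3 / 2)"
    using Suc by (intro mult_mono) auto
  also have "\<dots> = Gamma (real (Suc k) + 3 / 2)"
    using Gamma_plus1[of "real k + 3 / 2"] nonpos_Ints_nonpos[of "real k + 3 / 2"]
    by (force simp: add_ac)
  finally show ?case .
qed

definition bessel_struve_coeff :: "nat \<Rightarrow> complex" where
  "bessel_struve_coeff n = 1 / (2 ^ n * Gamma (1 + of_nat n / 2) ^ 2)"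

lemma bessel_struve_coeff_even:
  "bessel_struve_coeff (2 * k) * z ^ (2 * k) = (z / 2) ^ (2 * k) / of_nat (fact k) ^ 2"
proof -
  have "Gamma (1 + of_nat (2 * k) / 2) = (fact k :: complex)"
    using Gamma_fact[of k] by (simp add: add.commute)
  then show ?thesis by (simp add: bessel_struve_coeff_def power_divide)
qed

lemma bessel_struve_coeff_odd:
  "bessel_struve_coeff (2 * k + 1) * z ^ (2 * k + 1)
     = (z / 2) ^ (2 * k + 1) / Gamma (of_nat k + 3 / 2) ^ 2"
proof -
  have "1 + of_nat (2 * k + 1) / 2 = (of_nat k + 3 / 2 :: complex)"
    by (simp add: field_simps)
  then show ?thesis by (simp add: bessel_struve_coeff_def power_divide)
qed

lemma norm_bessel_struve_coeff_even:
  "norm (bessel_struve_coeff (2 * k) * z ^ (2 * k)) \<le> (norm z ^ 2 / 4) ^ k / fact k"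
proof -
  have "norm (bessel_struve_coeff (2 * k) * z ^ (2 * k)) = (norm z ^ 2 / 4) ^ k / fact k ^ 2"
    unfolding bessel_struve_coeff_even
    by (simp add: norm_divide norm_mult norm_power power_mult power_divide)
  also have "\<dots> \<le> (norm z ^ 2 / 4) ^ k / fact k"
    by (intro divide_left_mono) (auto simp: power2_eq_square)
  finally show ?thesis .
qed

lemma norm_bessel_struve_coeff_odd:
  "norm (bessel_struve_coeff (2 * k + 1) * z ^ (2 * k + 1))
     \<le> (4 / pi) * (norm z / 2) * ((norm z ^ 2 / 4) ^ k / fact k)"
proof -
  have Gamma_eq: "Gamma (of_nat k + 3 / 2 :: complex) = of_real (Gamma (real k + 3 / 2))"
    by (subst Gamma_complex_of_real[symmetric]) simp
  have "fact k * pi / 4 \<le> fact k ^ 2 * pi / 4"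
    by (simp add: power2_eq_square)
  also have "\<dots> = (fact k * (sqrt pi / 2)) ^ 2"
    by (simp add: power_mult_distrib power_divide)
  also have "\<dots> \<le> Gamma (real k + 3 / 2) ^ 2"
    using Gamma_nat_plus_three_halves_ge by (intro power_mono) auto
  finally have Gamma_ge: "fact k * pi / 4 \<le> Gamma (real k + 3 / 2) ^ 2" .
  have Gamma_pos: "0 < Gamma (real k + 3 / 2)"
    by (rule Gamma_real_pos) simp
  have "norm (bessel_struve_coeff (2 * k + 1) * z ^ (2 * k + 1))
      = (norm z / 2) * (norm z ^ 2 / 4) ^ k / Gamma (real k + 3 / 2) ^ 2"
    unfolding bessel_struve_coeff_odd
    by (simp add: Gamma_eq norm_divide norm_mult norm_power power_mult power_divide)
  also have "\<dots> \<le> (norm z / 2) * (norm z ^ 2 / 4) ^ k / (fact k * pi / 4)"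
    by (intro divide_left_mono Gamma_ge mult_pos_pos zero_less_power Gamma_pos) auto
  also have "\<dots> = (4 / pi) * (norm z / 2) * ((norm z ^ 2 / 4) ^ k / fact k)"
    by (simp add: field_simps)
  finally show ?thesis .
qed

lemma summable_norm_bessel_struve_even_odd:
  shows "summable (\<lambda>k. norm (bessel_struve_coeff (2 * k) * z ^ (2 * k)))"
    and "summable (\<lambda>k. norm (bessel_struve_coeff (2 * k + 1) * z ^ (2 * k + 1)))"
proof -
  have exp_series: "summable (\<lambda>k. (norm z ^ 2 / 4) ^ k / fact k)"
    using summable_exp[of "norm z ^ 2 / 4"] by (simp only: divide_inverse mult.commute)
  show "summable (\<lambda>k. norm (bessel_struve_coeff (2 * k) * z ^ (2 * k)))"
    by (rule summable_comparison_test'[OF exp_series])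
      (use norm_bessel_struve_coeff_even in \<open>simp only: real_norm_def abs_norm_cancel\<close>)
  show "summable (\<lambda>k. norm (bessel_struve_coeff (2 * k + 1) * z ^ (2 * k + 1)))"
    by (rule summable_comparison_test'[OF summable_mult[OF exp_series, of "4 / pi * (norm z / 2)"]])
      (use norm_bessel_struve_coeff_odd in \<open>simp only: real_norm_def abs_norm_cancel\<close>)
qed

lemma summable_norm_bessel_struve: "summable (\<lambda>n. norm (bessel_struve_coeff n * z ^ n))"
  by (rule summable_even_odd[OF summable_norm_bessel_struve_even_odd])

lemma besselI0_plus_struveL0_sums:
  "(\<lambda>n. bessel_struve_coeff n * z ^ n) sums (besselI0 z + struveL0 z)"
proof (rule sums_even_odd)
  show "(\<lambda>k. bessel_struve_coeff (2 * k) * z ^ (2 * k)) sums besselI0 z"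
    using summable_sums[OF summable_norm_cancel[OF summable_norm_bessel_struve_even_odd(1)]]
    unfolding besselI0_def bessel_struve_coeff_even .
  show "(\<lambda>k. bessel_struve_coeff (2 * k + 1) * z ^ (2 * k + 1)) sums struveL0 z"
    using summable_sums[OF summable_norm_cancel[OF summable_norm_bessel_struve_even_odd(2)]]
    unfolding struveL0_def bessel_struve_coeff_odd .
qed

lemma isCont_besselI0_plus_struveL0: "isCont (\<lambda>z. besselI0 z + struveL0 z) z"
proof -
  have "(\<lambda>z. besselI0 z + struveL0 z) = (\<lambda>z. \<Sum>n. bessel_struve_coeff n * z ^ n)"
    using besselI0_plus_struveL0_sums by (auto simp: sums_iff)
  then show ?thesis
    by (simp add: isCont_powser_converges_everywhere
        summable_norm_cancel[OF summable_norm_bessel_struve])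
qed

section \<open>The Beta integral for complex parameters\<close>

definition gamma_density :: "complex \<Rightarrow> real \<Rightarrow> complex" where
  "gamma_density s x = indicator {0<..} x *\<^sub>R (of_real x powr (s - 1) * of_real (exp (- x)))"

definition beta_density :: "complex \<Rightarrow> complex \<Rightarrow> real \<Rightarrow> complex" where
  "beta_density p q w =
     indicator {0<..<1} w *\<^sub>R (of_real w powr (p - 1) * of_real (1 - w) powr (q - 1))"

lemma borel_measurable_gamma_density [measurable]: "gamma_density s \<in> borel_measurable borel"
  unfolding gamma_density_def
  by (intro borel_measurable_continuous_on_indicator) (auto intro!: continuous_intros)

lemma borel_measurable_beta_density [measurable]: "beta_density p q \<in> borel_measurable borel"
  unfolding beta_density_def
  by (intro borel_measurable_continuous_on_indicator) (auto intro!: continuous_intros)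

lemma
  assumes "0 < Re s"
  shows integrable_gamma_density: "integrable lborel (gamma_density s)"
    and integral_gamma_density: "integral\<^sup>L lborel (gamma_density s) = Gamma s"
proof -
  have eq: "(\<lambda>x. indicator {0<..} x *\<^sub>R (of_real x powr (s - 1) / of_real (exp x)))
            = gamma_density s"
    by (auto simp: gamma_density_def fun_eq_iff exp_minus field_simps)
  have "set_integrable lebesgue {0<..} (\<lambda>x. of_real x powr (s - 1) / of_real (exp x))"
    using absolutely_integrable_Gamma_integral'[OF assms] .
  then have int: "integrable lebesgue (gamma_density s)"
    unfolding set_integrable_def eq .
  then show "integrable lborel (gamma_density s)"
    by (simp add: integrable_completion)
  have "integral {0<..} (\<lambda>x. of_real x powr (s - 1) / of_real (exp x)) = Gamma s"
    using Gamma_integral_complex'[OF assms] by (simp add: integral_unique)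
  with set_lebesgue_integral_eq_integral(2)[OF \<open>set_integrable lebesgue _ _\<close>]
  have "integral\<^sup>L lebesgue (gamma_density s) = Gamma s"
    unfolding set_lebesgue_integral_def eq by simp
  then show "integral\<^sup>L lborel (gamma_density s) = Gamma s"
    by (simp add: integral_completion)
qed

lemma integrable_beta_density:
  assumes "0 < Re p" "0 < Re q"
  shows "integrable lborel (beta_density p q)"
proof (rule Bochner_Integration.integrable_bound[OF _ _ AE_I2])
  show "integrable lborel
          (\<lambda>w. indicator {0..1} w *\<^sub>R (w powr (Re p - 1) * (1 - w) powr (Re q - 1)))"
    using integrable_Beta[of "Re p" "Re q"] assms unfolding set_integrable_def by simp
  show "norm (beta_density p q w)
        \<le> norm (indicator {0..1} w *\<^sub>R (w powr (Re p - 1) * (1 - w) powr (Re q - 1)))" for w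
    by (auto simp: beta_density_def indicator_def norm_mult norm_powr_real_powr)
qed simp

lemma gamma_density_scaled_product:
  assumes "0 < u"
  shows "gamma_density s (u * w) * gamma_density t (u - u * w)
       = of_real u powr (s + t - 2) * of_real (exp (- u)) * beta_density s t w"
proof (cases "0 < w \<and> w < 1")
  case True
  have u_powr: "of_real u powr (s - 1) * of_real u powr (t - 1) = of_real u powr (s + t - 2)"
    by (simp add: powr_add[symmetric] diff_add_eq add_diff_eq)
  have exp_sum: "exp (- (u * w)) * exp (- (u - u * w)) = exp (- u)"
    by (simp add: exp_add[symmetric])
  have "gamma_density s (u * w) * gamma_density t (u - u * w)
      = (of_real u * of_real w) powr (s - 1) * (of_real u * of_real (1 - w)) powr (t - 1)
        * of_real (exp (- (u * w)) * exp (- (u - u * w)))"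
    using True assms by (simp add: gamma_density_def right_diff_distrib mult_ac)
  also have "\<dots> = of_real u powr (s - 1) * of_real u powr (t - 1) * of_real (exp (- u))
                    * (of_real w powr (s - 1) * of_real (1 - w) powr (t - 1))"
    using assms by (simp only: powr_times_real_left exp_sum Reals_of_real Re_complex_of_real
        less_imp_le mult_ac)
  also have "\<dots> = of_real u powr (s + t - 2) * of_real (exp (- u)) * beta_density s t w"
    using True by (simp add: beta_density_def u_powr)
  finally show ?thesis .
next
  case False
  with assms show ?thesis
    by (auto simp: gamma_density_def beta_density_def indicator_def zero_less_mult_iff
        mult_less_cancel_left1)
qed

lemma integral_gamma_density_convolution:
  assumes "0 < u"
  shows "(\<integral>x. gamma_density s x * gamma_density t (u - x) \<partial>lborel)
       = gamma_density (s + t) u * integral\<^sup>L lborel (beta_density s t)"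
proof -
  have "of_real u powr (1 + (s + t - 2)) = of_real u * of_real u powr (s + t - 2)"
    by (subst powr_add) simp
  then have u_powr: "of_real u * of_real u powr (s + t - 2) = of_real u powr (s + t - 1)"
    by (simp add: algebra_simps)
  have "(\<integral>x. gamma_density s x * gamma_density t (u - x) \<partial>lborel)
      = u *\<^sub>R (\<integral>w. gamma_density s (u * w) * gamma_density t (u - u * w) \<partial>lborel)"
    using lborel_integral_real_affine[of u _ 0] assms by simp
  also have "\<dots> = u *\<^sub>R (\<integral>w. of_real u powr (s + t - 2) * of_real (exp (- u)) * beta_density s t w
                                \<partial>lborel)"
    using assms by (simp add: gamma_density_scaled_product)
  also have "\<dots> = gamma_density (s + t) u * integral\<^sup>L lborel (beta_density s t)"
    using assms by (simp add: gamma_density_def scaleR_conv_of_real u_powr flip: mult.assoc)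
  finally show ?thesis .
qed

lemma integrable_gamma_density_convolution:
  assumes "0 < Re s" "0 < Re t"
  shows "integrable (lborel \<Otimes>\<^sub>M lborel) (\<lambda>(x, u). gamma_density s x * gamma_density t (u - x))"
proof -
  have "(\<integral>\<^sup>+(x, u). norm (gamma_density s x * gamma_density t (u - x)) \<partial>(lborel \<Otimes>\<^sub>M lborel))
      = (\<integral>\<^sup>+x. \<integral>\<^sup>+u. norm (gamma_density s x) * norm (gamma_density t (u - x)) \<partial>lborel \<partial>lborel)"
    by (subst lborel.nn_integral_fst[symmetric]) (auto simp: norm_mult)
  also have "\<dots> = (\<integral>\<^sup>+x. norm (gamma_density s x) * (\<integral>\<^sup>+u. norm (gamma_density t u) \<partial>lborel)
                     \<partial>lborel)"
  proof (intro nn_integral_cong)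
    fix x :: real
    have "(\<integral>\<^sup>+u. norm (gamma_density t u) \<partial>lborel)
        = (\<integral>\<^sup>+u. norm (gamma_density t (- x + 1 * u)) \<partial>lborel)"
      using nn_integral_real_affine[of "\<lambda>u. ennreal (norm (gamma_density t u))" 1 "- x"] by simp
    then show "(\<integral>\<^sup>+u. ennreal (norm (gamma_density s x) * norm (gamma_density t (u - x))) \<partial>lborel)
        = ennreal (norm (gamma_density s x)) * (\<integral>\<^sup>+u. norm (gamma_density t u) \<partial>lborel)"
      by (simp add: ennreal_mult nn_integral_cmult)
  qed
  also have "\<dots> = (\<integral>\<^sup>+x. norm (gamma_density s x) \<partial>lborel)
                   * (\<integral>\<^sup>+u. norm (gamma_density t u) \<partial>lborel)"
    by (simp add: nn_integral_multc)
  also have "\<dots> < \<infinity>"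
    using integrable_gamma_density[OF assms(1)] integrable_gamma_density[OF assms(2)]
    unfolding integrable_iff_bounded by (simp add: ennreal_mult_less_top)
  finally show ?thesis
    unfolding integrable_iff_bounded by (simp add: case_prod_beta')
qed

lemma integral_beta_density:
  assumes "0 < Re s" "0 < Re t"
  shows "integral\<^sup>L lborel (beta_density s t) = Beta s t"
proof -
  define B where "B = integral\<^sup>L lborel (beta_density s t)"
  have "Gamma s * Gamma t = (\<integral>x. gamma_density s x * (\<integral>u. gamma_density t u \<partial>lborel) \<partial>lborel)"
    using assms by (simp add: integrable_gamma_density integral_gamma_density)
  also have "\<dots> = (\<integral>x. (\<integral>u. gamma_density s x * gamma_density t (u - x) \<partial>lborel) \<partial>lborel)"
    using lborel_integral_real_affine[of 1 "gamma_density t" "- _"] by simp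
  also have "\<dots> = (\<integral>u. (\<integral>x. gamma_density s x * gamma_density t (u - x) \<partial>lborel) \<partial>lborel)"
    using lborel_pair.Fubini_integral[OF integrable_gamma_density_convolution[OF assms]] by simp
  also have "\<dots> = (\<integral>u. gamma_density (s + t) u * B \<partial>lborel)"
  proof (intro Bochner_Integration.integral_cong refl)
    fix u :: real
    show "(\<integral>x. gamma_density s x * gamma_density t (u - x) \<partial>lborel) = gamma_density (s + t) u * B"
    proof (cases "0 < u")
      case True
      then show ?thesis by (simp add: B_def integral_gamma_density_convolution)
    next
      case False
      then have "(\<lambda>x. gamma_density s x * gamma_density t (u - x)) = (\<lambda>x. 0)"
        by (auto simp: gamma_density_def indicator_def)
      with False show ?thesis by (simp add: gamma_density_def)
    qed
  qed
  also have "\<dots> = Gamma (s + t) * B"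
    using assms by (simp add: integral_gamma_density)
  finally show ?thesis
    using Gamma_nonzero_Re_pos[of "s + t"] assms by (simp add: B_def Beta_def field_simps)
qed

lemma beta_density_mult_power:
  "of_real w ^ n * beta_density p q w = beta_density (p + of_nat n) q w"
proof (cases "0 < w \<and> w < 1")
  case True
  have "of_real w powr (p + of_nat n - 1) = of_real w powr (of_nat n + (p - 1))"
    by (simp add: algebra_simps)
  also have "\<dots> = of_real w ^ n * of_real w powr (p - 1)"
    using True by (subst powr_add) simp
  finally show ?thesis
    using True by (simp add: beta_density_def)
qed (auto simp: beta_density_def)

lemma Beta_plus_Beta_plus1:
  assumes "0 < Re x" "0 < Re y"
  shows "Beta x y + Beta (x + 1) y = (2 * x + y) * Gamma x * Gamma y / Gamma (x + y + 1)"
proof -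
  have nz: "x + y \<noteq> 0" "Gamma (x + y) \<noteq> 0"
    using assms Gamma_nonzero_Re_pos[of "x + y"] by (auto simp: complex_eq_iff)
  have "(x + y) * Beta (x + 1) y = x * Beta x y"
    using assms by (intro Beta_plus1_left Re_pos_notin_nonpos_Ints)
  then have "Beta x y + Beta (x + 1) y = (2 * x + y) / (x + y) * Beta x y"
    using nz by (simp add: field_simps)
  also have "\<dots> = (2 * x + y) * Gamma x * Gamma y / Gamma (x + y + 1)"
    using nz Gamma_plus1[OF Re_pos_notin_nonpos_Ints, of "x + y"] assms by (simp add: Beta_def)
  finally show ?thesis .
qed

lemma
  assumes "0 < Re p" "0 < Re q"
  shows integrable_power_mult_beta_density_plus1:
      "integrable lborel (\<lambda>v. of_real v ^ n * ((1 + of_real v) * beta_density p q v))"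
    and integral_power_mult_beta_density_plus1:
      "(\<integral>v. of_real v ^ n * ((1 + of_real v) * beta_density p q v) \<partial>lborel)
       = (2 * (p + of_nat n) + q) * Gamma (p + of_nat n) * Gamma q / Gamma (p + of_nat n + q + 1)"
proof -
  have split: "of_real v ^ n * ((1 + of_real v) * beta_density p q v)
             = beta_density (p + of_nat n) q v + beta_density (p + of_nat n + 1) q v" for v
    using beta_density_mult_power[of v n p q] beta_density_mult_power[of v "Suc n" p q]
    by (simp add: algebra_simps)
  have int: "integrable lborel (beta_density (p + of_nat n) q)"
    "integrable lborel (beta_density (p + of_nat n + 1) q)"
    using assms by (auto intro!: integrable_beta_density)
  then show "integrable lborel (\<lambda>v. of_real v ^ n * ((1 + of_real v) * beta_density p q v))"
    unfolding split by simp
  show "(\<integral>v. of_real v ^ n * ((1 + of_real v) * beta_density p q v) \<partial>lborel)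
       = (2 * (p + of_nat n) + q) * Gamma (p + of_nat n) * Gamma q / Gamma (p + of_nat n + q + 1)"
    using assms int unfolding split
    by (simp add: integral_beta_density Beta_plus_Beta_plus1)
qed

section \<open>Integrating a power series against a weight on \<open>[-1, 1]\<close>\<close>

lemma norm_power_mult_le:
  fixes F :: "real \<Rightarrow> complex"
  assumes "F v \<noteq> 0 \<Longrightarrow> \<bar>v\<bar> \<le> 1"
  shows "norm (of_real v ^ n * F v) \<le> norm (F v)"
proof (cases "F v = 0")
  case False
  then have "norm (of_real v ^ n :: complex) \<le> 1"
    using assms by (simp add: norm_power power_le_one)
  then show ?thesis
    unfolding norm_mult by (intro mult_left_le_one_le) auto
qed simp

lemma integrable_power_mult:
  fixes F :: "real \<Rightarrow> complex"
  assumes F: "integrable lborel F" and supp: "\<And>v. F v \<noteq> 0 \<Longrightarrow> \<bar>v\<bar> \<le> 1"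
  shows "integrable lborel (\<lambda>v. of_real v ^ n * F v)"
proof (rule Bochner_Integration.integrable_bound[OF F _ AE_I2])
  show "(\<lambda>v. of_real v ^ n * F v) \<in> borel_measurable lborel"
    using borel_measurable_integrable[OF F] by measurable
  show "norm (of_real v ^ n * F v) \<le> norm (F v)" for v
    by (rule norm_power_mult_le) (rule supp)
qed

lemma
  fixes F :: "real \<Rightarrow> complex" and c :: "nat \<Rightarrow> complex"
  assumes F: "integrable lborel F" and supp: "\<And>v. F v \<noteq> 0 \<Longrightarrow> \<bar>v\<bar> \<le> 1"
    and c: "summable (\<lambda>n. norm (c n))"
  shows integrable_mult_power_series:
      "integrable lborel (\<lambda>v. F v * (\<Sum>n. c n * of_real v ^ n))"
    and integral_mult_power_series_sums:
      "(\<lambda>n. c n * (\<integral>v. of_real v ^ n * F v \<partial>lborel))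
         sums (\<integral>v. F v * (\<Sum>n. c n * of_real v ^ n) \<partial>lborel)"
proof -
  define g where "g n v = c n * (of_real v ^ n * F v)" for n v
  have bound: "norm (g n v) \<le> norm (c n) * norm (F v)" for n v
    unfolding g_def norm_mult[of "c n"] by (intro mult_left_mono norm_power_mult_le supp) simp_all
  have g_int: "integrable lborel (g n)" for n
    unfolding g_def
    by (intro Bochner_Integration.integrable_mult_right integrable_power_mult F supp)
  have pointwise: "summable (\<lambda>n. norm (g n v))" for v
    by (rule summable_comparison_test'[OF summable_mult2[OF c, of "norm (F v)"]])
      (simp add: bound)
  have norm_integrals: "summable (\<lambda>n. \<integral>v. norm (g n v) \<partial>lborel)"
  proof (rule summable_comparison_test'[OF summable_mult2[OF c, of "\<integral>v. norm (F v) \<partial>lborel"]])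
    fix n
    have "(\<integral>v. norm (g n v) \<partial>lborel) \<le> (\<integral>v. norm (c n) * norm (F v) \<partial>lborel)"
      using F g_int bound by (intro integral_mono) auto
    then show "norm (\<integral>v. norm (g n v) \<partial>lborel) \<le> norm (c n) * (\<integral>v. norm (F v) \<partial>lborel)"
      by simp
  qed
  have series: "F v * (\<Sum>n. c n * of_real v ^ n) = (\<Sum>n. g n v)" for v
  proof (cases "F v = 0")
    case False
    then have "norm (c n * of_real v ^ n) \<le> norm (c n)" for n
      using supp by (simp add: norm_mult norm_power mult_left_le power_le_one)
    then have "summable (\<lambda>n. c n * of_real v ^ n)"
      by (intro summable_comparison_test'[OF c]) simp
    then show ?thesis
      by (simp add: g_def suminf_mult[symmetric] mult_ac)
  qed (simp add: g_def)
  show "integrable lborel (\<lambda>v. F v * (\<Sum>n. c n * of_real v ^ n))"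
    unfolding series by (rule integrable_suminf[OF g_int AE_I2[OF pointwise] norm_integrals])
  show "(\<lambda>n. c n * (\<integral>v. of_real v ^ n * F v \<partial>lborel))
          sums (\<integral>v. F v * (\<Sum>n. c n * of_real v ^ n) \<partial>lborel)"
    unfolding series using sums_integral[OF g_int AE_I2[OF pointwise] norm_integrals]
    by (simp add: g_def)
qed

section \<open>The substitution \<open>v = a / D(x)\<close>\<close>

lemma set_borel_integral_change_of_variables_real:
  fixes f :: "real \<Rightarrow> 'a::euclidean_space"
  assumes S: "S \<in> sets borel"
    and deriv: "\<And>x. x \<in> S \<Longrightarrow> (g has_field_derivative h x) (at x within S)"
    and inj: "inj_on g S"
    and meas: "set_borel_measurable borel (g ` S) f"
    and int: "set_integrable lborel S (\<lambda>x. \<bar>h x\<bar> *\<^sub>R f (g x))"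
  shows "set_integrable lborel (g ` S) f"
    and "(LINT x:g ` S|lborel. f x) = (LINT x:S|lborel. \<bar>h x\<bar> *\<^sub>R f (g x))"
proof -
  have int_leb: "(\<lambda>x. \<bar>h x\<bar> *\<^sub>R f (g x)) absolutely_integrable_on S"
    using int unfolding set_integrable_def
    by (simp add: integrable_completion borel_measurable_integrable)
  have "f absolutely_integrable_on g ` S
        \<and> integral (g ` S) f = integral S (\<lambda>x. \<bar>h x\<bar> *\<^sub>R f (g x))"
    using has_absolute_integral_change_of_variables_real[of S g h f] S deriv inj int_leb by auto
  then have "set_integrable lebesgue (g ` S) f"
    and eq: "integral (g ` S) f = integral S (\<lambda>x. \<bar>h x\<bar> *\<^sub>R f (g x))"
    by auto
  then show int_img: "set_integrable lborel (g ` S) f"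
    using meas unfolding set_integrable_def set_borel_measurable_def
    by (simp add: integrable_completion)
  show "(LINT x:g ` S|lborel. f x) = (LINT x:S|lborel. \<bar>h x\<bar> *\<^sub>R f (g x))"
    using set_borel_integral_eq_integral(2)[OF int_img] set_borel_integral_eq_integral(2)[OF int] eq
    by simp
qed

definition radical :: "real \<Rightarrow> real \<Rightarrow> real" where
  "radical a x = x + a + sqrt (x\<^sup>2 + 2 * a * x)"

definition radical_param :: "real \<Rightarrow> real \<Rightarrow> real" where
  "radical_param a v = a * (1 - v)\<^sup>2 / (2 * v)"

lemma radical_param_has_derivative:
  assumes "v \<noteq> 0"
  shows "(radical_param a has_field_derivative - (a * (1 - v) * (1 + v)) / (2 * v\<^sup>2))
           (at v within S)"
proof (rule has_field_derivative_at_within)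
  show "(radical_param a has_field_derivative - (a * (1 - v) * (1 + v)) / (2 * v\<^sup>2)) (at v)"
    unfolding radical_param_def
    by (rule derivative_eq_intros refl | simp add: assms)+
      (use assms in \<open>simp add: field_simps power2_eq_square\<close>)
qed

lemma inj_on_radical_param:
  assumes "0 < a"
  shows "inj_on (radical_param a) {0<..<1}"
proof (rule inj_onI)
  fix v w assume v: "v \<in> {0<..<1}" and w: "w \<in> {0<..<1}"
    and eq: "radical_param a v = radical_param a w"
  then have "(1 - v)\<^sup>2 * w = (1 - w)\<^sup>2 * v"
    using assms by (simp add: radical_param_def field_simps)
  then have "(w - v) * (1 - v * w) = 0"
    by (simp add: algebra_simps power2_eq_square)
  moreover have "v * w < 1 * 1"
    using v w by (intro mult_strict_mono) auto
  ultimately show "v = w" by simp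
qed

lemma radical_radical_param:
  assumes "0 < a" "0 < v" "v < 1"
  shows "radical a (radical_param a v) = a / v"
proof -
  have "(radical_param a v)\<^sup>2 + 2 * a * radical_param a v = (a * (1 - v) * (1 + v) / (2 * v))\<^sup>2"
    using assms by (simp add: radical_param_def field_simps power2_eq_square)
  then have "sqrt ((radical_param a v)\<^sup>2 + 2 * a * radical_param a v)
             = a * (1 - v) * (1 + v) / (2 * v)"
    using assms by simp
  then show ?thesis
    using assms by (simp add: radical_def radical_param_def field_simps power2_eq_square)
qed

lemma radical_param_image:
  assumes "0 < a"
  shows "radical_param a ` {0<..<1} = {0<..}"
proof (intro equalityI subsetI)
  fix x assume "x \<in> radical_param a ` {0<..<1}"
  with assms show "x \<in> {0<..}" by (auto simp: radical_param_def)
next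
  fix x :: real assume "x \<in> {0<..}"
  then have x: "0 < x" by simp
  define r where "r = sqrt (x\<^sup>2 + 2 * a * x)"
  have r: "0 \<le> r" "r\<^sup>2 = x\<^sup>2 + 2 * a * x"
    using x assms by (auto simp: r_def)
  have radical_eq: "radical a x = x + a + r"
    by (simp add: radical_def r_def)
  have "a / radical a x \<in> {0<..<1}"
    using x r assms by (auto simp: radical_eq)
  moreover have "radical_param a (a / radical a x) = x"
  proof -
    have pos: "0 < x + a + r"
      using x r assms by simp
    have "radical_param a (a / d) = (d - a)\<^sup>2 / (2 * d)" if "0 < d" for d
      using that assms by (simp add: radical_param_def field_simps power2_eq_square)
    from this[OF pos] have "radical_param a (a / radical a x) = (x + r)\<^sup>2 / (2 * (x + a + r))"
      by (simp add: radical_eq)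
    also have "(x + r)\<^sup>2 = x * (2 * (x + a + r))"
      using r by (simp add: power2_eq_square algebra_simps)
    finally show ?thesis
      using pos by simp
  qed
  ultimately show "x \<in> radical_param a ` {0<..<1}"
    by (metis image_eqI)
qed

lemma of_real_powr_eq_exp_ln: "0 < r \<Longrightarrow> complex_of_real r powr z = exp (z * of_real (ln r))"
  by (simp add: powr_def Ln_of_real)

lemma radical_substitution_weight:
  fixes lam mu :: complex
  assumes a: "0 < a" and v: "0 < v" "v < 1"
  shows "of_real (a * (1 - v) * (1 + v) / (2 * v\<^sup>2))
           * (of_real (radical_param a v) powr (mu - 1) * of_real (a / v) powr (- lam))
       = of_real a powr (mu - lam) * 2 powr (- mu)
           * ((1 + of_real v) * (of_real v powr (lam - mu - 1) * of_real (1 - v) powr (2 * mu - 1)))"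
proof -
  define la l1 l2 lv t
    where "la = ln a" "l1 = ln (1 - v)" "l2 = ln (1 + v)" "lv = ln v" "t = ln (2::real)"
  have ln_jacobian: "ln (a * (1 - v) * (1 + v) / (2 * v\<^sup>2)) = la + l1 + l2 - t - 2 * lv"
    using a v by (simp add: ln_mult ln_div ln_realpow la_l1_l2_lv_t_def)
  have ln_param: "ln (radical_param a v) = la + 2 * l1 - t - lv"
    using a v by (simp add: radical_param_def ln_mult ln_div ln_realpow la_l1_l2_lv_t_def)
  have ln_quotient: "ln (a / v) = la - lv"
    using a v by (simp add: ln_div la_l1_l2_lv_t_def)
  have pos: "0 < a * (1 - v) * (1 + v) / (2 * v\<^sup>2)" "0 < radical_param a v" "0 < a / v"
    using a v by (auto simp: radical_param_def)
  have "of_real (a * (1 - v) * (1 + v) / (2 * v\<^sup>2))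
           * (of_real (radical_param a v) powr (mu - 1) * of_real (a / v) powr (- lam))
      = exp (of_real (la + l1 + l2 - t - 2 * lv)
             + ((mu - 1) * of_real (la + 2 * l1 - t - lv) + - lam * of_real (la - lv)))"
  proof -
    have "complex_of_real (a * (1 - v) * (1 + v) / (2 * v\<^sup>2))
        = exp (of_real (ln (a * (1 - v) * (1 + v) / (2 * v\<^sup>2))))"
      using pos(1) by (simp add: exp_of_real)
    then show ?thesis
      by (simp only: of_real_powr_eq_exp_ln[OF pos(2)] of_real_powr_eq_exp_ln[OF pos(3)]
          ln_jacobian ln_param ln_quotient exp_add)
  qed
  also have "\<dots> = exp ((mu - lam) * of_real la + - mu * of_real t
                     + (of_real l2 + ((lam - mu - 1) * of_real lv + (2 * mu - 1) * of_real l1)))"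
    by (rule arg_cong[where f = exp]) (simp add: algebra_simps)
  also have "\<dots> = of_real a powr (mu - lam) * 2 powr (- mu)
           * ((1 + of_real v) * (of_real v powr (lam - mu - 1) * of_real (1 - v) powr (2 * mu - 1)))"
  proof -
    have "exp ((mu - lam) * of_real la) = of_real a powr (mu - lam)"
      "exp (- mu * of_real t) = 2 powr (- mu)"
      "exp (complex_of_real l2) = 1 + complex_of_real v"
      "exp ((lam - mu - 1) * of_real lv) = of_real v powr (lam - mu - 1)"
      "exp ((2 * mu - 1) * of_real l1) = of_real (1 - v) powr (2 * mu - 1)"
      using a v of_real_powr_eq_exp_ln[of 2 "- mu"] of_real_powr_eq_exp_ln[of "1 - v" "2 * mu - 1"]
      by (simp_all add: of_real_powr_eq_exp_ln exp_of_real la_l1_l2_lv_t_def)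
    then show ?thesis
      by (simp only: exp_add)
  qed
  finally show ?thesis .
qed

lemma continuous_on_radical_integrand:
  assumes "0 < a"
  shows "continuous_on {0<..} (\<lambda>x. of_real x powr (mu - 1) * of_real (radical a x) powr (- lam)
           * (besselI0 (y / of_real (radical a x)) + struveL0 (y / of_real (radical a x))))"
proof -
  have radical_pos: "0 < radical a x" if "0 < x" for x
    using assms that by (simp add: radical_def add_pos_nonneg)
  have "continuous_on {0<..} (radical a)"
    unfolding radical_def by (intro continuous_intros)
  then have cont_radical: "continuous_on {0<..} (\<lambda>x. complex_of_real (radical a x))"
    by (intro continuous_intros)
  have "continuous_on {0<..} (\<lambda>x. y / of_real (radical a x))"
    by (rule continuous_on_divide[OF continuous_on_const cont_radical])
      (use radical_pos in fastforce)
  then have "continuous_on {0<..} ((\<lambda>z. besselI0 z + struveL0 z) \<circ> (\<lambda>x. y / of_real (radical a x)))"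
    by (rule continuous_on_compose)
      (simp add: continuous_at_imp_continuous_on isCont_besselI0_plus_struveL0)
  then have "continuous_on {0<..}
      (\<lambda>x. besselI0 (y / of_real (radical a x)) + struveL0 (y / of_real (radical a x)))"
    by (simp add: o_def)
  moreover have "continuous_on {0<..} (\<lambda>x. complex_of_real x powr (mu - 1))"
    by (rule continuous_on_powr_complex[OF _ _ continuous_on_of_real[OF continuous_on_id]
          continuous_on_const]) auto
  moreover have "continuous_on {0<..} (\<lambda>x. complex_of_real (radical a x) powr (- lam))"
    by (rule continuous_on_powr_complex[OF _ _ cont_radical continuous_on_const])
      (use radical_pos in \<open>fastforce simp: less_imp_le\<close>)+
  ultimately show ?thesis
    by (intro continuous_on_mult)
qed

lemma radical_substituted_integrand:
  fixes lam mu y :: complex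
  assumes a: "0 < a" and v: "0 < v" "v < 1"
  shows "\<bar>- (a * (1 - v) * (1 + v)) / (2 * v\<^sup>2)\<bar>
           *\<^sub>R (of_real (radical_param a v) powr (mu - 1)
               * of_real (radical a (radical_param a v)) powr (- lam)
               * (besselI0 (y / of_real (radical a (radical_param a v)))
                  + struveL0 (y / of_real (radical a (radical_param a v)))))
       = of_real a powr (mu - lam) * 2 powr (- mu)
           * ((1 + of_real v) * beta_density (lam - mu) (2 * mu) v)
           * (\<Sum>n. bessel_struve_coeff n * (y / of_real a) ^ n * of_real v ^ n)"
proof -
  have jacobian: "\<bar>- (a * (1 - v) * (1 + v)) / (2 * v\<^sup>2)\<bar> = a * (1 - v) * (1 + v) / (2 * v\<^sup>2)"
    using a v by simp
  have arg: "y / of_real (a / v) = y / of_real a * of_real v"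
    using a v by (simp add: field_simps)
  have "(\<lambda>n. bessel_struve_coeff n * (y / of_real a) ^ n * of_real v ^ n)
          sums (besselI0 (y / of_real a * of_real v) + struveL0 (y / of_real a * of_real v))"
    using besselI0_plus_struveL0_sums[of "y / of_real a * of_real v"]
    by (simp only: power_mult_distrib mult.assoc)
  then have series: "besselI0 (y / of_real (a / v)) + struveL0 (y / of_real (a / v))
      = (\<Sum>n. bessel_struve_coeff n * (y / of_real a) ^ n * of_real v ^ n)"
    unfolding arg by (rule sums_unique)
  have beta: "beta_density (lam - mu) (2 * mu) v
      = of_real v powr (lam - mu - 1) * of_real (1 - v) powr (2 * mu - 1)"
    using v by (simp add: beta_density_def)
  have "\<bar>- (a * (1 - v) * (1 + v)) / (2 * v\<^sup>2)\<bar>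
           *\<^sub>R (of_real (radical_param a v) powr (mu - 1)
               * of_real (radical a (radical_param a v)) powr (- lam)
               * (besselI0 (y / of_real (radical a (radical_param a v)))
                  + struveL0 (y / of_real (radical a (radical_param a v)))))
      = of_real (a * (1 - v) * (1 + v) / (2 * v\<^sup>2))
          * (of_real (radical_param a v) powr (mu - 1) * of_real (a / v) powr (- lam))
          * (\<Sum>n. bessel_struve_coeff n * (y / of_real a) ^ n * of_real v ^ n)"
    unfolding jacobian
    by (simp only: radical_radical_param[OF a v] series scaleR_conv_of_real mult.assoc)
  also have "\<dots> = of_real a powr (mu - lam) * 2 powr (- mu)
          * ((1 + of_real v) * (of_real v powr (lam - mu - 1) * of_real (1 - v) powr (2 * mu - 1)))
          * (\<Sum>n. bessel_struve_coeff n * (y / of_real a) ^ n * of_real v ^ n)"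
    by (simp only: radical_substitution_weight[OF a v])
  finally show ?thesis
    unfolding beta .
qed

lemma integral_radical_substitution:
  fixes lam mu y :: complex
  assumes a: "0 < a" and mu: "0 < Re mu" and lam: "Re mu < Re lam"
  defines "F \<equiv> \<lambda>v. of_real a powr (mu - lam) * 2 powr (- mu)
                     * ((1 + of_real v) * beta_density (lam - mu) (2 * mu) v)"
    and "c \<equiv> \<lambda>n. bessel_struve_coeff n * (y / of_real a) ^ n"
  shows "(LBINT x:{0<..}. of_real x powr (mu - 1) * of_real (radical a x) powr (- lam)
            * (besselI0 (y / of_real (radical a x)) + struveL0 (y / of_real (radical a x))))
       = (\<integral>v. F v * (\<Sum>n. c n * of_real v ^ n) \<partial>lborel)"
proof -
  define f where "f x = of_real x powr (mu - 1) * of_real (radical a x) powr (- lam)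
                 * (besselI0 (y / of_real (radical a x)) + struveL0 (y / of_real (radical a x)))" for x
  define h where "h v = - (a * (1 - v) * (1 + v)) / (2 * v\<^sup>2)" for v
  have F_int: "integrable lborel F"
    using integrable_power_mult_beta_density_plus1[of "lam - mu" "2 * mu" 0] mu lam
    by (simp add: F_def)
  have substituted: "(\<lambda>v. indicator {0<..<1} v *\<^sub>R (\<bar>h v\<bar> *\<^sub>R f (radical_param a v)))
      = (\<lambda>v. F v * (\<Sum>n. c n * of_real v ^ n))"
  proof
    fix v :: real
    show "indicator {0<..<1} v *\<^sub>R (\<bar>h v\<bar> *\<^sub>R f (radical_param a v))
          = F v * (\<Sum>n. c n * of_real v ^ n)"
      using radical_substituted_integrand[OF a, of v mu lam y]
      by (cases "0 < v \<and> v < 1") (auto simp: h_def f_def F_def c_def beta_density_def)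
  qed
  have "set_integrable lborel {0<..<1} (\<lambda>v. \<bar>h v\<bar> *\<^sub>R f (radical_param a v))"
    unfolding set_integrable_def substituted
    by (rule integrable_mult_power_series[OF F_int])
      (auto simp: F_def c_def beta_density_def indicator_def summable_norm_bessel_struve
        power_mult_distrib)
  moreover have "set_borel_measurable borel {0<..} f"
    unfolding set_borel_measurable_def f_def
    by (intro borel_measurable_continuous_on_indicator continuous_on_radical_integrand a) simp
  ultimately have "(LBINT x:{0<..}. f x) = (LBINT v:{0<..<1}. \<bar>h v\<bar> *\<^sub>R f (radical_param a v))"
    using set_borel_integral_change_of_variables_real(2)[of "{0<..<1}" "radical_param a" h f]
      radical_param_has_derivative inj_on_radical_param[OF a] radical_param_image[OF a]
    by (auto simp: h_def)
  also have "\<dots> = (\<integral>v. F v * (\<Sum>n. c n * of_real v ^ n) \<partial>lborel)"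
    unfolding set_lebesgue_integral_def substituted ..
  finally show ?thesis
    by (simp add: f_def)
qed

lemma radical_bessel_struve_integral_sums:
  fixes lam mu y :: complex
  assumes a: "0 < a" and mu: "0 < Re mu" and lam: "Re mu < Re lam"
  shows "(\<lambda>n. of_real a powr (mu - lam) * 2 powr (- mu)
            * (bessel_struve_coeff n * (y / of_real a) ^ n
            * ((2 * (lam - mu + of_nat n) + 2 * mu) * Gamma (lam - mu + of_nat n) * Gamma (2 * mu)
               / Gamma (lam - mu + of_nat n + 2 * mu + 1))))
         sums (LBINT x:{0<..}. of_real x powr (mu - 1) * of_real (radical a x) powr (- lam)
                 * (besselI0 (y / of_real (radical a x)) + struveL0 (y / of_real (radical a x))))"
proof -
  define K where "K = of_real a powr (mu - lam) * (2 :: complex) powr (- mu)"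
  define F where "F = (\<lambda>v. K * ((1 + of_real v) * beta_density (lam - mu) (2 * mu) v))"
  define c where "c = (\<lambda>n. bessel_struve_coeff n * (y / of_real a) ^ n)"
  have Re: "0 < Re (lam - mu)" "0 < Re (2 * mu)"
    using mu lam by simp_all
  have moment: "(\<integral>v. of_real v ^ n * F v \<partial>lborel)
      = K * ((2 * (lam - mu + of_nat n) + 2 * mu) * Gamma (lam - mu + of_nat n) * Gamma (2 * mu)
             / Gamma (lam - mu + of_nat n + 2 * mu + 1))" for n
    using integral_power_mult_beta_density_plus1[OF Re, of n]
      integrable_power_mult_beta_density_plus1[OF Re, of n]
    by (simp add: F_def mult.left_commute[of "of_real v ^ n" K for v])
  have F_int: "integrable lborel F"
    using integrable_power_mult_beta_density_plus1[OF Re, of 0] by (simp add: F_def)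
  have "(\<lambda>n. c n * (\<integral>v. of_real v ^ n * F v \<partial>lborel))
          sums (\<integral>v. F v * (\<Sum>n. c n * of_real v ^ n) \<partial>lborel)"
    using summable_norm_bessel_struve[of "y / of_real a"]
    by (intro integral_mult_power_series_sums F_int)
      (auto simp: F_def c_def beta_density_def indicator_def power_mult_distrib)
  then show ?thesis
    unfolding integral_radical_substitution[OF a mu lam] moment
    by (simp add: F_def K_def c_def mult_ac)
qed

section \<open>The Wright series\<close>

lemma Gamma_nat_half_duplication:
  "Gamma (1 / 2 + of_nat n / 2) * Gamma (1 + of_nat n / 2)
     = (of_real (sqrt pi) * fact n / 2 ^ n :: complex)"
proof -
  define z :: complex where "z = 1 / 2 + of_nat n / 2"
  have two_z: "2 * z = 1 + of_nat n"
    by (simp add: z_def ring_distribs)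
  have "Gamma z * Gamma (z + 1 / 2)
        = exp ((1 - 2 * z) * of_real (ln 2)) * of_real (sqrt pi) * Gamma (2 * z)"
    by (rule Gamma_legendre_duplication) (auto simp: z_def intro!: Re_pos_notin_nonpos_Ints)
  moreover have "z + 1 / 2 = 1 + of_nat n / 2"
    by (simp add: z_def)
  moreover have "Gamma (2 * z) = fact n"
    unfolding two_z by (rule Gamma_fact)
  moreover have "exp ((1 - 2 * z) * of_real (ln 2)) * 2 ^ n = 1"
  proof -
    have "exp (of_nat n * complex_of_real (ln 2)) = 2 ^ n"
      by (simp add: exp_of_nat_mult exp_of_real)
    then show ?thesis
      by (simp add: z_def field_simps exp_minus)
  qed
  ultimately show ?thesis
    by (simp add: z_def field_simps)
qed

lemma wright_coeff_eq_bessel_struve_moment: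
  fixes lam mu :: complex
  assumes "0 < Re mu" "Re mu < Re lam"
  shows "2 * Gamma (2 * mu) / of_real (sqrt pi)
           * (Gamma (1 / 2 + of_nat n / 2) * Gamma (lam + 1 + of_nat n) * Gamma (lam - mu + of_nat n)
              / (Gamma (1 + of_nat n / 2) * Gamma (lam + of_nat n) * Gamma (1 + lam + mu + of_nat n))
              / fact n)
       = bessel_struve_coeff n * ((2 * (lam - mu + of_nat n) + 2 * mu) * Gamma (lam - mu + of_nat n)
           * Gamma (2 * mu) / Gamma (lam - mu + of_nat n + 2 * mu + 1))"
proof -
  have nz: "Gamma (1 + of_nat n / 2 :: complex) \<noteq> 0" "Gamma (lam + of_nat n) \<noteq> 0"
    "Gamma (1 + lam + mu + of_nat n) \<noteq> 0"
    using assms by (auto intro!: Gamma_nonzero_Re_pos)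
  have half: "Gamma (1 / 2 + of_nat n / 2)
              = of_real (sqrt pi) * fact n / (2 ^ n * Gamma (1 + of_nat n / 2 :: complex))"
    using Gamma_nat_half_duplication[of n] nz by (simp add: field_simps)
  have succ: "Gamma (lam + 1 + of_nat n) = (lam + of_nat n) * Gamma (lam + of_nat n)"
    using Gamma_plus1[of "lam + of_nat n"] assms by (simp add: Re_pos_notin_nonpos_Ints add_ac)
  have arg: "lam - mu + of_nat n + 2 * mu + 1 = 1 + lam + mu + of_nat n"
    by (simp add: algebra_simps)
  show ?thesis
    unfolding half succ arg using nz
    by (simp add: bessel_struve_coeff_def field_simps power2_eq_square)
qed

definition wright_term ::
  "(complex \<times> real) list \<Rightarrow> (complex \<times> real) list \<Rightarrow> complex \<Rightarrow> nat \<Rightarrow> complex" where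
  "wright_term as bs z k =
     (\<Prod>(a, \<alpha>)\<leftarrow>as. Gamma (a + of_real \<alpha> * of_nat k))
       / (\<Prod>(b, \<beta>)\<leftarrow>bs. Gamma (b + of_real \<beta> * of_nat k)) * z ^ k / of_nat (fact k)"

lemma wrightPsi_eq_if_sums:
  assumes "c \<noteq> 0" and "(\<lambda>k. c * wright_term as bs z k) sums s"
  shows "s = c * wrightPsi as bs z"
proof -
  have "wright_term as bs z sums (s / c)"
    using assms sums_mult_iff[of c "wright_term as bs z" "s / c"] by simp
  moreover have "wrightPsi as bs z = suminf (wright_term as bs z)"
    unfolding wrightPsi_def wright_term_def ..
  ultimately show ?thesis
    using assms(1) by (simp add: sums_iff)
qed

lemma wright_term_eq_bessel_struve_moment:
  fixes lam mu z :: complex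
  assumes "0 < Re mu" "Re mu < Re lam"
  shows "2 powr (1 - mu) * of_real a powr (mu - lam) * Gamma (2 * mu) / of_real (sqrt pi)
           * wright_term [(1/2, 1/2), (lam + 1, 1), (lam - mu, 1)]
               [(1, 1/2), (lam, 1), (1 + lam + mu, 1)] z n
       = of_real a powr (mu - lam) * 2 powr (- mu) * (bessel_struve_coeff n * z ^ n
           * ((2 * (lam - mu + of_nat n) + 2 * mu) * Gamma (lam - mu + of_nat n) * Gamma (2 * mu)
              / Gamma (lam - mu + of_nat n + 2 * mu + 1)))"
proof -
  have "2 powr (1 - mu) * of_real a powr (mu - lam) * Gamma (2 * mu) / of_real (sqrt pi)
          * wright_term [(1/2, 1/2), (lam + 1, 1), (lam - mu, 1)]
               [(1, 1/2), (lam, 1), (1 + lam + mu, 1)] z n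
      = of_real a powr (mu - lam) * 2 powr (- mu) * z ^ n
        * (2 * Gamma (2 * mu) / of_real (sqrt pi)
           * (Gamma (1 / 2 + of_nat n / 2) * Gamma (lam + 1 + of_nat n) * Gamma (lam - mu + of_nat n)
              / (Gamma (1 + of_nat n / 2) * Gamma (lam + of_nat n) * Gamma (1 + lam + mu + of_nat n))
              / fact n))"
    by (simp add: wright_term_def powr_diff powr_minus field_simps)
  then show ?thesis
    unfolding wright_coeff_eq_bessel_struve_moment[OF assms] by (simp only: mult_ac)
qed

theorem theorem3:
  fixes a :: real and lam mu y :: complex and D :: "real \<Rightarrow> real"
  assumes "a > 0"
    and "0 < Re mu" and "Re mu < Re lam"
    and "\<And>x. D x = x + a + sqrt (x\<^sup>2 + 2 * a * x)"
  shows "(LBINT x:{0<..}. (of_real x) powr (mu - 1) * (of_real (D x)) powr (- lam)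
            * (besselI0 (y / of_real (D x)) + struveL0 (y / of_real (D x))))
       = 2 powr (1 - mu) * (of_real a) powr (mu - lam) * Gamma (2 * mu) / of_real (sqrt pi)
         * wrightPsi [(1/2, 1/2), (lam + 1, 1), (lam - mu, 1)]
                     [(1, 1/2), (lam, 1), (1 + lam + mu, 1)] (y / of_real a)"
proof (rule wrightPsi_eq_if_sums)
  show "2 powr (1 - mu) * of_real a powr (mu - lam) * Gamma (2 * mu) / of_real (sqrt pi) \<noteq> 0"
    using Gamma_nonzero_Re_pos[of "2 * mu"] assms(1,2) by (simp add: powr_def)
  have "D = radical a"
    using assms(4) by (simp add: fun_eq_iff radical_def)
  then show "(\<lambda>n. 2 powr (1 - mu) * of_real a powr (mu - lam) * Gamma (2 * mu) / of_real (sqrt pi)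
           * wright_term [(1/2, 1/2), (lam + 1, 1), (lam - mu, 1)]
               [(1, 1/2), (lam, 1), (1 + lam + mu, 1)] (y / of_real a) n)
      sums (LBINT x:{0<..}. of_real x powr (mu - 1) * of_real (D x) powr (- lam)
            * (besselI0 (y / of_real (D x)) + struveL0 (y / of_real (D x))))"
    unfolding wright_term_eq_bessel_struve_moment[OF assms(2,3)]
    using radical_bessel_struve_integral_sums[OF assms(1-3)] by simp
qed

end
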